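(* Let $n\geq 2$ and let $k$ be a positive integer with $k+2^k-1\leq n$. For every positive integer $c$ with $n-2^k+1\leq c\leq (n-k-2^k+2)2^k-1$, there is an arithmetical structure $(r_1,\dots,r_n)$ on $K_n$ with $r_1=c$.
   Context: An arithmetical structure on the complete graph $K_n$ is an $n$-tuple $(r_1,r_2,\dots,r_n)$ of positive integers with $\gcd(r_1,\dots,r_n)=1$ such that $r_j$ divides $\sum_{i=1}^n r_i$ for every $j$. The entries are always listed so that $r_1\geq r_2\geq\dots\geq r_n$; thus $r_1$ is the largest value of the structure. *)

theory Defs
  imports Main
begin

text \<open>The tuple is represented by a function on the
  indices 1..n (values outside are irrelevant).\<close>

definition arith_structure_Kn :: "nat \<Rightarrow> (nat \<Rightarrow> nat) \<Rightarrow> bool" where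
  "arith_structure_Kn n r \<longleftrightarrow>
     (\<forall>i\<in>{1..n}. r i > 0) \<and>
     (\<forall>i\<in>{1..n}. \<forall>j\<in>{1..n}. i \<le> j \<longrightarrow> r j \<le> r i) \<and>
     Gcd (r ` {1..n}) = 1 \<and>
     (\<forall>j\<in>{1..n}. r j dvd (\<Sum>i=1..n. r i))"

end

theory Submission
  imports Defs "HOL-Library.Multiset"
begin

text \<open>Put \<open>N = n + 1 - 2^k\<close>. Take \<open>2^k - 1\<close> entries equal to \<open>c\<close> and complete them by a
  partition of \<open>c\<close> into \<open>N\<close> powers of two, each at most \<open>2^k\<close> and one of them equal to \<open>1\<close>.
  The entries then sum to \<open>2^k c\<close>, which every entry divides, and the entry \<open>1\<close> forces
  \<open>gcd = 1\<close>. A greedy argument shows that such a partition exists for every \<open>c\<close> with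
  \<open>N \<le> c < (N - k + 1) 2^k\<close>, which is exactly the range in the statement.\<close>

lemma sorted_list_arith_structure_Kn:
  fixes xs :: "nat list"
  assumes "length xs = n" and "sorted_wrt (\<ge>) xs" and "1 \<in> set xs"
    and "\<forall>x\<in>set xs. 0 < x \<and> x dvd sum_list xs"
  shows "arith_structure_Kn n (\<lambda>i. xs ! (i - 1))"
proof -
  have shift: "{1..n} = Suc ` {..<n}"
    by (simp add: image_Suc_lessThan)
  have entries: "(\<lambda>i. xs ! (i - 1)) ` {1..n} = set xs"
    unfolding shift image_image using assms(1) by (auto simp: set_conv_nth)
  have "(\<Sum>i=1..n. xs ! (i - 1)) = (\<Sum>i<n. xs ! i)"
    unfolding shift by (simp add: sum.reindex)
  also have "\<dots> = sum_list xs"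
    using assms(1) by (simp add: sum_list_sum_nth atLeast0LessThan)
  finally have sum: "(\<Sum>i=1..n. xs ! (i - 1)) = sum_list xs" .
  have nonincreasing: "xs ! (j - 1) \<le> xs ! (i - 1)" if "i \<in> {1..n}" "j \<in> {1..n}" "i \<le> j" for i j
    using that assms(1) sorted_wrt_nth_less[OF assms(2), of "i - 1" "j - 1"]
    by (cases "i = j") auto
  have "Gcd (set xs) = 1"
    using assms(3) by (metis Gcd_dvd nat_dvd_1_iff_1)
  then show ?thesis
    unfolding arith_structure_Kn_def using entries sum nonincreasing assms(4) by auto
qed

lemma arith_structure_Kn_from_partition:
  fixes m c :: nat and ys :: "nat list"
  assumes "m \<ge> 1" and "c \<ge> 1" and "sum_list ys = c" and "1 \<in> set ys"
    and "\<forall>y\<in>set ys. y dvd (m + 1) * c"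
  shows "\<exists>r. arith_structure_Kn (m + length ys) r \<and> r 1 = c"
proof -
  define xs where "xs = replicate m c @ rev (sort ys)"
  have "sum_list (sort ys) = sum_list ys"
    by (metis mset_sort sum_mset_sum_list)
  then have total: "sum_list xs = (m + 1) * c"
    using assms(3) by (simp add: xs_def sum_list_replicate)
  have parts_le: "\<forall>y\<in>set ys. y \<le> c"
    using assms(3) member_le_sum_list[of _ ys] by auto
  have "sorted_wrt (\<ge>) (replicate m c)"
    by (simp add: sorted_wrt_iff_nth_less)
  then have sorted: "sorted_wrt (\<ge>) xs"
    using parts_le by (auto simp: xs_def sorted_wrt_append sorted_wrt_rev)
  have entries: "0 < x \<and> x dvd sum_list xs" if "x \<in> set xs" for x
  proof -
    have "x dvd (m + 1) * c"
      using that assms(5) by (auto simp: xs_def)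
    moreover have "(m + 1) * c > 0"
      using assms(2) by simp
    ultimately show ?thesis
      using total dvd_pos_nat by metis
  qed
  have "length xs = m + length ys" and "1 \<in> set xs" and "xs ! 0 = c"
    using assms(1,4) by (simp_all add: xs_def nth_append)
  then show ?thesis
    using sorted_list_arith_structure_Kn[of xs] sorted entries
    by (intro exI[of _ "\<lambda>i. xs ! (i - 1)"]) auto
qed

lemma add_two_power_le_mult_two_power:
  fixes N a p :: nat
  assumes "a < p" and "p \<le> N"
  shows "N + 2 ^ a \<le> (N - p + 1) * 2 ^ p"
proof -
  obtain t where p: "p = Suc t"
    using assms(1) by (cases p) auto
  have "2 ^ a \<le> (2::nat) ^ t"
    using assms(1) p by (intro power_increasing) auto
  moreover have "Suc t \<le> 2 ^ t"
    using less_exp[of t] by (rule Suc_leI)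
  moreover have "(N - p + 1) * 2 ^ p = (N - p) * 2 ^ p + 2 * 2 ^ t"
    using p by simp
  moreover have "N - p \<le> (N - p) * 2 ^ p"
    by simp
  ultimately show ?thesis
    using assms(2) p by linarith
qed

text \<open>Subtracting the largest admissible power of two keeps the remainder in range.
  Below the bound \<open>(N - min N q + 1) * 2 ^ min N q\<close> every value \<open>V \<ge> N\<close> is a sum of \<open>N\<close>
  powers of two dividing \<open>2^q\<close>; for \<open>q \<le> N\<close> the bound minus one is attained by \<open>N - q\<close>
  copies of \<open>2^q\<close> together with \<open>2^(q-1), \<dots>, 2, 1\<close>.\<close>

lemma greedy_two_power_step:
  fixes N V q :: nat
  assumes "Suc N \<le> V" and "V < (Suc N - min (Suc N) q + 1) * 2 ^ min (Suc N) q"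
  shows "\<exists>a\<le>q. N + 2 ^ a \<le> V \<and> V - 2 ^ a < (N - min N q + 1) * 2 ^ min N q"
proof -
  have "1 \<le> V - N"
    using assms(1) by simp
  then obtain a where a: "2 ^ a \<le> V - N" "V - N < 2 ^ Suc a"
    using ex_power_ivl1[of 2 "V - N"] by auto
  show ?thesis
  proof (cases "q \<le> N")
    case True
    then have V_bound: "V < (N - q + 1) * 2 ^ q + 2 ^ q"
      using assms(2) by (simp add: Suc_diff_le algebra_simps)
    show ?thesis
    proof (cases "2 ^ q \<le> V - N")
      case True
      then show ?thesis
        using \<open>q \<le> N\<close> V_bound assms(1) by (intro exI[of _ q]) auto
    next
      case False
      have "(2::nat) ^ a < 2 ^ q"
        using a(1) False by linarith
      then have "a < q"
        by (rule power_less_imp_less_exp[rotated]) simp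
      then have "N + 2 ^ a \<le> (N - q + 1) * 2 ^ q"
        using \<open>q \<le> N\<close> by (rule add_two_power_le_mult_two_power)
      then show ?thesis
        using a \<open>a < q\<close> \<open>q \<le> N\<close> by (intro exI[of _ a]) auto
    qed
  next
    case False
    then have V_bound: "V < 2 ^ Suc N"
      using assms(2) by simp
    have "(2::nat) ^ a < 2 ^ Suc N"
      using a(1) V_bound by linarith
    then have "a \<le> N"
      using power_less_imp_less_exp[of "2::nat" a "Suc N"] by simp
    have "V - 2 ^ a < 2 ^ N"
    proof (cases "a = N")
      case True
      then show ?thesis
        using V_bound by simp
    next
      case False
      then have "N + 2 ^ a \<le> 2 ^ N"
        using add_two_power_le_mult_two_power[of a N N] \<open>a \<le> N\<close> by simp
      then show ?thesis
        using a by simp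
    qed
    then show ?thesis
      using False a \<open>a \<le> N\<close> by (intro exI[of _ a]) auto
  qed
qed

lemma partition_into_two_powers:
  fixes N V q :: nat
  assumes "1 \<le> N" and "N \<le> V" and "V < (N - min N q + 1) * 2 ^ min N q"
  shows "\<exists>ys. length ys = N \<and> sum_list ys = V \<and> 1 \<in> set ys \<and> (\<forall>y\<in>set ys. y dvd 2 ^ q)"
  using assms
proof (induction N arbitrary: V rule: nat_induct_at_least)
  case base
  then have "V = 1"
    by (cases q) auto
  then show ?case
    by (intro exI[of _ "[1]"]) auto
next
  case (Suc N)
  obtain a where a: "a \<le> q" "N + 2 ^ a \<le> V" "V - 2 ^ a < (N - min N q + 1) * 2 ^ min N q"
    using greedy_two_power_step[OF Suc.prems] by blast
  have "N \<le> V - 2 ^ a"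
    using a(2) by simp
  then obtain ys where ys: "length ys = N" "sum_list ys = V - 2 ^ a" "1 \<in> set ys"
    "\<forall>y\<in>set ys. y dvd 2 ^ q"
    using Suc.IH a(3) by blast
  have "(2::nat) ^ a dvd 2 ^ q"
    using a(1) by (rule le_imp_power_dvd)
  then show ?case
    using ys a(2) by (intro exI[of _ "2 ^ a # ys"]) auto
qed

theorem proposition2p4:
  fixes n k c :: nat
  assumes "n \<ge> 2" and "k \<ge> 1" and "k + 2 ^ k - 1 \<le> n"
    and "c \<ge> 1"
    and "int n - 2 ^ k + 1 \<le> int c"
    and "int c \<le> (int n - int k - 2 ^ k + 2) * 2 ^ k - 1"
  shows "\<exists>r. arith_structure_Kn n r \<and> r 1 = c"
proof -
  define N where "N = n + 1 - 2 ^ k"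
  have "k < 2 ^ k"
    by (rule less_exp)
  then have "k \<le> N" and N_int: "int N = int n + 1 - 2 ^ k" and n_eq: "2 ^ k - 1 + N = n"
    using assms(3) by (auto simp: N_def of_nat_diff)
  have "N \<le> c"
    using assms(5) N_int by linarith
  have width: "int (N - k + 1) = int n - int k - 2 ^ k + 2"
    using N_int \<open>k \<le> N\<close> by (simp add: of_nat_diff)
  have "int c < int ((N - k + 1) * 2 ^ k)"
    unfolding of_nat_mult of_nat_power of_nat_numeral width using assms(6) by linarith
  then have c_bound: "c < (N - min N k + 1) * 2 ^ min N k"
    using \<open>k \<le> N\<close> by (simp only: of_nat_less_iff min_absorb2)
  obtain ys where ys: "length ys = N" "sum_list ys = c" "1 \<in> set ys"
    "\<forall>y\<in>set ys. y dvd 2 ^ k"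
    using partition_into_two_powers[OF _ \<open>N \<le> c\<close> c_bound] \<open>k \<le> N\<close> assms(2) by auto
  have "\<forall>y\<in>set ys. y dvd (2 ^ k - 1 + 1) * c"
    using ys(4) by simp
  moreover have "2 ^ k - 1 \<ge> (1::nat)"
    using assms(2) \<open>k < 2 ^ k\<close> by linarith
  ultimately show ?thesis
    using arith_structure_Kn_from_partition[of "2 ^ k - 1" c ys] ys(1-3) n_eq assms(4)
    by simp
qed

end
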